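(* Let $n\ge 3$, let $\{(M_i,g_i)\}_{i\ge1}$ be a sequence in $\mathcal{RotSym}_n$ with graphical representatives $f_i$, all defined on $[a_0,\infty)$ for some $a_0>0$, and suppose $f_i(r)\to f(r)$ for every $r\ge a_0$, for some function $f:[a_0,\infty)\to\mathbb{R}$. If $r_0\in(a_0,\infty)$ and $f$ is differentiable at $r_0$, then $\lim_{i\to\infty}f_i'(r_0)=f'(r_0)$.
   Context: $\mathcal{RotSym}_n$ is the class of smooth Riemannian $n$-manifolds $(M,g)$ with $g=ds^2+h(s)^2g_{S^{n-1}}$, $h:[0,\infty)\to[0,\infty)$ smooth, such that either $h(0)=0,h'(0)=1$ or $h(0)>0,h'(0)=0$; $h'(s)>0$ for $s>0$; $h(s)\to\infty$; and $g$ has nonnegative scalar curvature. A graphical representative is a radial function $f(r)$, $r=|\vec x|\ge h(0)$, continuous and smooth in the interior, whose graph in $\mathbb{R}^{n+1}$ with induced Euclidean metric is isometric to $(M,g)$. For such $f$, the function $r\mapsto r^{n-2}\frac{f'(r)^2}{1+f'(r)^2}$ (twice the Hawking mass of the sphere over $|\vec x|=r$) is nondecreasing and $f'\ge 0$. *)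

theory Defs
  imports "HOL-Analysis.Analysis"
begin

definition smooth_real :: "(real \<Rightarrow> real) \<Rightarrow> bool" where
  "smooth_real H \<longleftrightarrow> (\<forall>k x. (deriv ^^ k) H differentiable at x)"

definition smooth_on_open :: "real set \<Rightarrow> (real \<Rightarrow> real) \<Rightarrow> bool" where
  "smooth_on_open U f \<longleftrightarrow> (\<forall>k. \<forall>x\<in>U. (deriv ^^ k) f differentiable at x)"

text \<open>Scalar curvature at radius s > 0 of the warped product metric
  ds^2 + h(s)^2 g_{S^{n-1}} on an n-manifold.\<close>
definition warped_scalar :: "nat \<Rightarrow> (real \<Rightarrow> real) \<Rightarrow> real \<Rightarrow> real" where
  "warped_scalar n h s =
     (real n - 1) * ((real n - 2) * (1 - (deriv h s)^2) - 2 * h s * deriv (deriv h) s) / (h s)^2"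

text \<open>The class RotSym_n, described by the warping function h on [0,oo).
  Smoothness of h on the closed half-line [0,oo) is expressed as the existence of
  a smooth function H on the real line agreeing with h on [0,oo) (Seeley extension);
  derivatives at s = 0 are those of H (the one-sided derivatives of h).\<close>
definition rotsym :: "nat \<Rightarrow> (real \<Rightarrow> real) \<Rightarrow> bool" where
  "rotsym n h \<longleftrightarrow>
     (\<exists>H. smooth_real H \<and> (\<forall>s\<ge>0. H s = h s) \<and>
        ((h 0 = 0 \<and> deriv H 0 = 1) \<or> (h 0 > 0 \<and> deriv H 0 = 0)) \<and>
        (\<forall>s>0. deriv H s > 0) \<and>
        filterlim h at_top at_top \<and>
        (\<forall>s\<ge>0. h s \<ge> 0) \<and>
        (\<forall>s\<ge>0. warped_scalar n H s \<ge> 0 \<or> (s = 0 \<and> h 0 = 0)))"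

text \<open>A graphical representative of the manifold with warping function h: a radial
  function f(r), r = |x| \<ge> h 0, continuous on [h 0, oo) and smooth in the interior,
  whose graph (with induced metric (1 + f'(r)^2) dr^2 + r^2 g_{S^{n-1}}) is isometric
  to ds^2 + h(s)^2 g_{S^{n-1}} via r = h(s), i.e. (1 + f'(h s)^2) h'(s)^2 = 1 for s > 0,
  normalized with f' \<ge> 0.\<close>
definition graphrep :: "(real \<Rightarrow> real) \<Rightarrow> (real \<Rightarrow> real) \<Rightarrow> bool" where
  "graphrep h f \<longleftrightarrow>
     continuous_on {h 0..} f \<and> smooth_on_open {h 0<..} f \<and>
     (\<forall>s>0. (1 + (deriv f (h s))^2) * (deriv h s)^2 = 1) \<and>
     (\<forall>r>h 0. deriv f r \<ge> 0)"

end

theory Submission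
  imports Defs
begin

text \<open>Writing \<open>\<phi>(t) = t\<^sup>2/(1+t\<^sup>2)\<close>, nonnegative scalar curvature makes the Hawking mass
  \<open>r\<^sup>n\<^sup>-\<^sup>2 \<phi>(f'(r))\<close> of a graphical representative nondecreasing in \<open>r\<close>; in terms of the
  warping function this is the quantity \<open>h\<^sup>n\<^sup>-\<^sup>2 (1 - h'\<^sup>2)\<close>, whose derivative is
  \<open>h\<^sup>n\<^sup>-\<^sup>3 h'\<close> times a positive multiple of the scalar curvature.
  Since \<open>\<phi>\<close> is increasing, a lower bound on \<open>f\<^sub>i'(r\<^sub>0)\<close> propagates to \<open>[r\<^sub>0, r\<^sub>0+\<delta>]\<close> up to a
  factor \<open>(r\<^sub>0/(r\<^sub>0+\<delta>))\<^sup>n\<^sup>-\<^sup>2\<close>, hence bounds the difference quotient of \<open>f\<^sub>i\<close> over that interval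
  from below; symmetrically an upper bound on \<open>f\<^sub>i'(r\<^sub>0)\<close> bounds the difference quotient over
  \<open>[r\<^sub>0-\<delta>, r\<^sub>0]\<close> from above. Difference quotients converge pointwise, and for small \<open>\<delta>\<close>
  those of \<open>f\<close> are close to \<open>f'(r\<^sub>0)\<close>, which squeezes \<open>f\<^sub>i'(r\<^sub>0)\<close>.\<close>

definition hawking_factor :: "real \<Rightarrow> real" where
  "hawking_factor t = t\<^sup>2 / (1 + t\<^sup>2)"

lemma hawking_factor_eq: "hawking_factor t = 1 - 1 / (1 + t\<^sup>2)"
proof -
  have "1 + t\<^sup>2 > 0" by (simp add: add_pos_nonneg)
  then show ?thesis unfolding hawking_factor_def by (simp add: field_simps)
qed

lemma hawking_factor_nonneg: "0 \<le> hawking_factor t"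
  unfolding hawking_factor_def by simp

lemma strict_mono_on_hawking_factor: "strict_mono_on {0..} hawking_factor"
proof (rule strict_mono_onI)
  fix a b :: real assume "a \<in> {0..}" "b \<in> {0..}" "a < b"
  then have "1 + a\<^sup>2 < 1 + b\<^sup>2" by (simp add: power_strict_mono)
  moreover have "0 < 1 + a\<^sup>2" by (simp add: add_pos_nonneg)
  ultimately have "1 / (1 + b\<^sup>2) < 1 / (1 + a\<^sup>2)" by (simp add: frac_less2)
  then show "hawking_factor a < hawking_factor b" by (simp add: hawking_factor_eq)
qed

lemma hawking_factor_less_iff:
  "0 \<le> a \<Longrightarrow> 0 \<le> b \<Longrightarrow> hawking_factor a < hawking_factor b \<longleftrightarrow> a < b"
  using strict_mono_on_less[OF strict_mono_on_hawking_factor] by simp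

lemma hawking_factor_le_iff:
  "0 \<le> a \<Longrightarrow> 0 \<le> b \<Longrightarrow> hawking_factor a \<le> hawking_factor b \<longleftrightarrow> a \<le> b"
  using hawking_factor_less_iff[of b a] by (meson not_less)

definition hawking_mass_mono :: "nat \<Rightarrow> real \<Rightarrow> (real \<Rightarrow> real) \<Rightarrow> bool" where
  "hawking_mass_mono p b F \<longleftrightarrow>
     (\<forall>r>b. F differentiable at r \<and> 0 \<le> deriv F r) \<and>
     (\<forall>r1 r2. b < r1 \<longrightarrow> r1 \<le> r2 \<longrightarrow>
        r1 ^ p * hawking_factor (deriv F r1) \<le> r2 ^ p * hawking_factor (deriv F r2))"

lemma hawking_mass_mono_MVT:
  assumes "hawking_mass_mono p b F" "b < x" "x < y"
  obtains \<xi> where "x < \<xi>" "\<xi> < y" "F y - F x = (y - x) * deriv F \<xi>"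
proof -
  have diff: "F differentiable at r" if "x \<le> r" for r
    using assms that unfolding hawking_mass_mono_def by auto
  have "continuous_on {x..y} F"
    by (intro continuous_at_imp_continuous_on ballI differentiable_imp_continuous_within diff) auto
  then obtain l \<xi> where "x < \<xi>" "\<xi> < y" "(F has_real_derivative l) (at \<xi>)"
    "F y - F x = (y - x) * l"
    using MVT[OF \<open>x < y\<close>] diff by (metis less_imp_le)
  with that show thesis by (metis DERIV_imp_deriv)
qed

lemma hawking_mass_mono_factor_le:
  assumes "hawking_mass_mono p b F" "0 \<le> b" "b < c" "c \<le> \<xi>"
  shows "hawking_factor (deriv F c) * (c / \<xi>) ^ p \<le> hawking_factor (deriv F \<xi>)"
proof -
  have "c ^ p * hawking_factor (deriv F c) \<le> \<xi> ^ p * hawking_factor (deriv F \<xi>)"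
    using assms unfolding hawking_mass_mono_def by auto
  moreover have "0 < \<xi>" using assms by linarith
  ultimately show ?thesis by (simp add: power_divide pos_divide_le_eq mult.commute)
qed

lemma hawking_mass_mono_increment_ge:
  assumes hm: "hawking_mass_mono p b F" and "0 \<le> b" "b < c" "c < y"
    and "u \<le> deriv F c" "v < u"
    and small: "0 < v \<Longrightarrow> hawking_factor v < hawking_factor u * (c / y) ^ p"
  shows "(y - c) * v \<le> F y - F c"
proof -
  obtain \<xi> where \<xi>: "c < \<xi>" "\<xi> < y" and incr: "F y - F c = (y - c) * deriv F \<xi>"
    using hawking_mass_mono_MVT[OF hm \<open>b < c\<close> \<open>c < y\<close>] .
  have nonneg: "0 \<le> deriv F r" if "b < r" for r
    using hm that unfolding hawking_mass_mono_def by auto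
  have "v \<le> deriv F \<xi>"
  proof (cases "0 < v")
    case True
    have "0 < c" using assms by linarith
    have "hawking_factor v < hawking_factor u * (c / y) ^ p" using small True .
    also have "\<dots> \<le> hawking_factor (deriv F c) * (c / \<xi>) ^ p"
      using assms True \<xi> \<open>0 < c\<close> hawking_factor_nonneg
      by (intro mult_mono power_mono frac_le) (auto simp: hawking_factor_le_iff)
    also have "\<dots> \<le> hawking_factor (deriv F \<xi>)"
      using hawking_mass_mono_factor_le[OF hm] assms \<xi> by simp
    finally show ?thesis
      using True \<xi> assms nonneg[of \<xi>] by (simp add: hawking_factor_less_iff)
  qed (use nonneg[of \<xi>] \<xi> assms in auto)
  then show ?thesis using incr \<xi> by (simp add: mult_left_mono)
qed

lemma hawking_mass_mono_increment_le:
  assumes hm: "hawking_mass_mono p b F" and "0 \<le> b" "b < x" "x < c"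
    and "deriv F c \<le> u" "u < v"
    and small: "0 \<le> u \<Longrightarrow> hawking_factor u * (c / x) ^ p < hawking_factor v"
  shows "F c - F x \<le> (c - x) * v"
proof -
  obtain \<xi> where \<xi>: "x < \<xi>" "\<xi> < c" and incr: "F c - F x = (c - x) * deriv F \<xi>"
    using hawking_mass_mono_MVT[OF hm \<open>b < x\<close> \<open>x < c\<close>] .
  have nonneg: "0 \<le> deriv F r" if "b < r" for r
    using hm that unfolding hawking_mass_mono_def by auto
  have "0 \<le> u" using nonneg[of c] assms by linarith
  have "0 < \<xi>" using assms \<xi> by linarith
  have "hawking_factor (deriv F \<xi>) * (\<xi> / c) ^ p \<le> hawking_factor (deriv F c)"
    using hawking_mass_mono_factor_le[OF hm] assms \<xi> by simp
  then have "hawking_factor (deriv F \<xi>) \<le> hawking_factor (deriv F c) * (c / \<xi>) ^ p"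
    using \<open>0 < \<xi>\<close> \<xi> by (simp add: power_divide field_simps)
  also have "\<dots> \<le> hawking_factor u * (c / x) ^ p"
    using assms \<xi> \<open>0 \<le> u\<close> \<open>0 < \<xi>\<close> nonneg[of c] hawking_factor_nonneg
    by (intro mult_mono power_mono frac_le) (auto simp: hawking_factor_le_iff)
  also have "\<dots> < hawking_factor v" using small \<open>0 \<le> u\<close> .
  finally have "deriv F \<xi> < v"
    using \<open>0 \<le> u\<close> assms \<xi> nonneg[of \<xi>] by (simp add: hawking_factor_less_iff)
  then show ?thesis using incr \<xi> by (simp add: mult_left_mono)
qed

lemma rotsym_warping_function:
  assumes "rotsym n h"
  obtains H where "\<And>x. (H has_real_derivative deriv H x) (at x)"
    and "\<And>x. (deriv H has_real_derivative deriv (deriv H) x) (at x)"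
    and "\<And>s. 0 \<le> s \<Longrightarrow> H s = h s" and "0 \<le> h 0"
    and "\<And>s. 0 < s \<Longrightarrow> 0 < deriv H s" and "filterlim H at_top at_top"
    and "\<And>s. 0 < s \<Longrightarrow> 0 \<le> warped_scalar n H s"
proof -
  obtain H where smooth: "smooth_real H" and Hh: "\<forall>s\<ge>0. H s = h s"
    and "\<forall>s>0. deriv H s > 0" "filterlim h at_top at_top" "\<forall>s\<ge>0. h s \<ge> 0"
    and scalar: "\<forall>s\<ge>0. warped_scalar n H s \<ge> 0 \<or> (s = 0 \<and> h 0 = 0)"
    using assms unfolding rotsym_def by blast
  have "(deriv ^^ k) H differentiable at x" for k x
    using smooth unfolding smooth_real_def by blast
  from this[of 0] this[of 1]
  have H': "(H has_real_derivative deriv H x) (at x)"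
    and H'': "(deriv H has_real_derivative deriv (deriv H) x) (at x)"
    for x by (simp_all add: DERIV_deriv_iff_real_differentiable)
  have "filterlim H at_top at_top"
    using \<open>filterlim h at_top at_top\<close> Hh
    by (subst filterlim_cong[OF refl refl]) (auto intro: eventually_mono[OF eventually_ge_at_top[of 0]])
  then show thesis
  proof (rule that[OF H' H'', rotated 3])
    show "0 < s \<Longrightarrow> 0 \<le> warped_scalar n H s" for s using scalar by (metis less_imp_le less_irrefl)
  qed (use Hh \<open>\<forall>s>0. deriv H s > 0\<close> \<open>\<forall>s\<ge>0. h s \<ge> 0\<close> in auto)
qed

lemma strict_mono_on_pos_deriv:
  fixes H :: "real \<Rightarrow> real"
  assumes H': "\<And>x. (H has_real_derivative deriv H x) (at x)"
    and pos: "\<And>s. a < s \<Longrightarrow> 0 < deriv H s"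
  shows "strict_mono_on {a..} H"
proof (rule strict_mono_onI)
  fix x y assume "x \<in> {a..}" "y \<in> {a..}" "x < y"
  show "H x < H y"
  proof (rule DERIV_pos_imp_increasing_open[OF \<open>x < y\<close>])
    fix t assume "x < t" "t < y"
    then show "\<exists>l. (H has_real_derivative l) (at t) \<and> 0 < l"
      using H'[of t] pos[of t] \<open>x \<in> {a..}\<close> by auto
  qed (use H' in \<open>intro continuous_at_imp_continuous_on ballI DERIV_isCont\<close>)
qed

lemma filterlim_at_top_attains:
  fixes H :: "real \<Rightarrow> real"
  assumes "continuous_on {a..} H" "filterlim H at_top at_top" "H a < r"
  obtains s where "a < s" "H s = r"
proof -
  have "\<forall>\<^sub>F S in at_top. r \<le> H S \<and> a \<le> S"
    using assms(2) by (intro eventually_conj eventually_ge_at_top) (simp add: filterlim_at_top)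
  then obtain S where "a \<le> S" "r \<le> H S"
    unfolding eventually_at_top_linorder by auto
  moreover have "continuous_on {a..S} H" using assms(1) by (rule continuous_on_subset) auto
  ultimately obtain s where "a \<le> s" "s \<le> S" "H s = r"
    using IVT'[of H a r S] assms(3) by auto
  moreover have "s \<noteq> a" using \<open>H s = r\<close> assms(3) by auto
  ultimately show thesis using that by (simp add: order_le_less)
qed

lemma warped_mass_mono:
  fixes H :: "real \<Rightarrow> real"
  assumes "3 \<le> n"
    and H': "\<And>x. (H has_real_derivative deriv H x) (at x)"
    and H'': "\<And>x. (deriv H has_real_derivative deriv (deriv H) x) (at x)"
    and pos: "\<And>s. 0 < s \<Longrightarrow> 0 < H s" and incr: "\<And>s. 0 < s \<Longrightarrow> 0 \<le> deriv H s"
    and scalar: "\<And>s. 0 < s \<Longrightarrow> 0 \<le> warped_scalar n H s"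
    and "0 < s1" "s1 \<le> s2"
  shows "H s1 ^ (n - 2) * (1 - (deriv H s1)\<^sup>2) \<le> H s2 ^ (n - 2) * (1 - (deriv H s2)\<^sup>2)"
proof (rule DERIV_nonneg_imp_increasing_open[OF \<open>s1 \<le> s2\<close>])
  define p where "p = n - 2"
  show "continuous_on {s1..s2} (\<lambda>s. H s ^ (n - 2) * (1 - (deriv H s)\<^sup>2))"
    using H' H'' by (intro continuous_at_imp_continuous_on ballI continuous_intros DERIV_isCont)
  fix s assume "s1 < s" "s < s2"
  then have "0 < s" using \<open>0 < s1\<close> by linarith
  let ?K = "real p * (1 - (deriv H s)\<^sup>2) - 2 * H s * deriv (deriv H) s"
  have "real n - 2 = real p" "0 < real n - 1" using \<open>3 \<le> n\<close> unfolding p_def by auto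
  then have "0 \<le> ?K"
    using scalar[OF \<open>0 < s\<close>] pos[OF \<open>0 < s\<close>]
    unfolding warped_scalar_def by (simp add: zero_le_divide_iff zero_le_mult_iff)
  have "Suc (p - 1) = p" using \<open>3 \<le> n\<close> unfolding p_def by simp
  then have split_power: "H s ^ p = H s * H s ^ (p - 1)" by (metis power_Suc)
  have "((\<lambda>s. H s ^ p * (1 - (deriv H s)\<^sup>2)) has_real_derivative
      real p * H s ^ (p - 1) * deriv H s * (1 - (deriv H s)\<^sup>2)
      + H s ^ p * (- (2 * deriv H s * deriv (deriv H) s))) (at s)"
    by (auto intro!: derivative_eq_intros H' H'' simp: power2_eq_square)
  then have "((\<lambda>s. H s ^ p * (1 - (deriv H s)\<^sup>2)) has_real_derivative
      H s ^ (p - 1) * deriv H s * ?K) (at s)"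
    by (simp add: split_power algebra_simps)
  moreover have "0 \<le> H s ^ (p - 1) * deriv H s * ?K"
    using pos[OF \<open>0 < s\<close>] incr[OF \<open>0 < s\<close>] \<open>0 \<le> ?K\<close> by simp
  ultimately show "\<exists>y. ((\<lambda>s. H s ^ (n - 2) * (1 - (deriv H s)\<^sup>2)) has_real_derivative y) (at s) \<and> 0 \<le> y"
    unfolding p_def by blast
qed

lemma graphrep_hawking_factor:
  assumes "graphrep h F" and Hh: "\<And>s. 0 \<le> s \<Longrightarrow> H s = h s" and "0 < s"
  shows "hawking_factor (deriv F (H s)) = 1 - (deriv H s)\<^sup>2"
proof -
  have "\<forall>\<^sub>F x in nhds s. h x = H x"
    using eventually_nhds_in_open[of "{0<..}" s] \<open>0 < s\<close> by (auto elim!: eventually_mono simp: Hh)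
  then have "deriv h s = deriv H s" by (rule deriv_cong_ev) simp
  moreover have "(1 + (deriv F (h s))\<^sup>2) * (deriv h s)\<^sup>2 = 1"
    using assms(1) \<open>0 < s\<close> unfolding graphrep_def by blast
  ultimately have "(1 + (deriv F (H s))\<^sup>2) * (deriv H s)\<^sup>2 = 1"
    using Hh[of s] \<open>0 < s\<close> by simp
  moreover have "0 < 1 + (deriv F (H s))\<^sup>2" by (simp add: add_pos_nonneg)
  ultimately have "(deriv H s)\<^sup>2 = 1 / (1 + (deriv F (H s))\<^sup>2)"
    by (simp add: eq_divide_eq mult.commute)
  then show ?thesis by (simp add: hawking_factor_eq)
qed

lemma graphrep_hawking_mass_mono:
  assumes "3 \<le> n" "rotsym n h" and graph: "graphrep h F"
  shows "hawking_mass_mono (n - 2) (h 0) F"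
proof -
  obtain H where H': "\<And>x. (H has_real_derivative deriv H x) (at x)"
    and H'': "\<And>x. (deriv H has_real_derivative deriv (deriv H) x) (at x)"
    and Hh: "\<And>s. 0 \<le> s \<Longrightarrow> H s = h s" and "0 \<le> h 0"
    and incr: "\<And>s. 0 < s \<Longrightarrow> 0 < deriv H s" and "filterlim H at_top at_top"
    and scalar: "\<And>s. 0 < s \<Longrightarrow> 0 \<le> warped_scalar n H s"
    using rotsym_warping_function[OF assms(2)] by blast
  have mono: "strict_mono_on {0..} H" using H' incr by (rule strict_mono_on_pos_deriv)
  have pos: "0 < H s" if "0 < s" for s
    using strict_mono_onD[OF mono, of 0 s] that Hh[of 0] \<open>0 \<le> h 0\<close> by simp
  have "continuous_on {0..} H"
    using H' by (intro continuous_at_imp_continuous_on ballI DERIV_isCont)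
  have attains: "\<exists>s>0. H s = r" if "h 0 < r" for r
  proof -
    have "H 0 < r" using that Hh[of 0] by simp
    with \<open>continuous_on {0..} H\<close> \<open>filterlim H at_top at_top\<close>
    obtain s where "0 < s" "H s = r" by (rule filterlim_at_top_attains)
    then show ?thesis by blast
  qed
  show ?thesis unfolding hawking_mass_mono_def
  proof (intro conjI allI impI)
    fix r assume "h 0 < r"
    then have "(deriv ^^ 0) F differentiable at r"
      using graph unfolding graphrep_def smooth_on_open_def by blast
    then show "F differentiable at r" by simp
    show "0 \<le> deriv F r" using graph \<open>h 0 < r\<close> unfolding graphrep_def by blast
  next
    fix r1 r2 assume "h 0 < r1" "r1 \<le> r2"
    obtain s1 s2 where "0 < s1" "H s1 = r1" "0 < s2" "H s2 = r2"
      using attains \<open>h 0 < r1\<close> \<open>r1 \<le> r2\<close> by (metis order_less_le_trans)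
    moreover from this have "s1 \<le> s2"
      using strict_mono_on_less[OF mono, of s2 s1] \<open>r1 \<le> r2\<close> by (auto simp: not_le[symmetric])
    ultimately show "r1 ^ (n - 2) * hawking_factor (deriv F r1) \<le> r2 ^ (n - 2) * hawking_factor (deriv F r2)"
      using warped_mass_mono[OF \<open>3 \<le> n\<close> H' H'' pos incr[THEN less_imp_le] scalar]
        graphrep_hawking_factor[OF graph Hh] by metis
  qed
qed

lemma tendsto_ratio_power_at_0:
  assumes "0 < c"
  shows "((\<lambda>t. k * (c / (c + t)) ^ p) \<longlongrightarrow> k) (at (0::real))"
proof -
  have "((\<lambda>t. k * (c / (c + t)) ^ p) \<longlongrightarrow> k * (c / (c + 0)) ^ p) (at 0)"
    using assms by (intro tendsto_intros) auto
  then show ?thesis using assms by simp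
qed

context
  fixes p :: nat and b :: "nat \<Rightarrow> real" and F :: "nat \<Rightarrow> real \<Rightarrow> real"
    and f :: "real \<Rightarrow> real" and a0 r0 D :: real
  assumes mass_mono: "\<And>i. hawking_mass_mono p (b i) (F i)"
    and b_nonneg: "\<And>i. 0 \<le> b i" and b_le: "\<And>i. b i \<le> a0"
    and pointwise: "\<And>r. a0 \<le> r \<Longrightarrow> (\<lambda>i. F i r) \<longlonglongrightarrow> f r"
    and "a0 < r0" and f_deriv: "(f has_real_derivative D) (at r0)"
begin

private lemma r0_pos: "0 < r0"
  using b_nonneg[of 0] b_le[of 0] \<open>a0 < r0\<close> by linarith

private lemma difference_quotient_tendsto:
  "((\<lambda>t. (f (r0 + t) - f r0) / t) \<longlongrightarrow> D) (at 0)"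
  using f_deriv by (simp add: DERIV_def)

private lemma eventually_deriv_less:
  assumes "D < a"
  shows "\<forall>\<^sub>F i in sequentially. deriv (F i) r0 < a"
proof -
  define v where "v = (D + a) / 2"
  have "D < v" "v < a" using assms unfolding v_def by auto
  have "\<forall>\<^sub>F t in at_right 0. (f (r0 + t) - f r0) / t < v"
    using order_tendstoD(2)[OF difference_quotient_tendsto \<open>D < v\<close>]
    by (simp add: eventually_at_split)
  moreover have "\<forall>\<^sub>F t in at_right 0.
      0 < v \<longrightarrow> hawking_factor v < hawking_factor a * (r0 / (r0 + t)) ^ p"
  proof (cases "0 < v")
    case True
    then have "hawking_factor v < hawking_factor a"
      using \<open>v < a\<close> by (simp add: hawking_factor_less_iff)
    from order_tendstoD(1)[OF tendsto_ratio_power_at_0[OF r0_pos] this]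
    show ?thesis by (auto simp: eventually_at_split elim: eventually_mono)
  qed simp
  moreover have "\<forall>\<^sub>F t in at_right (0::real). 0 < t" by (rule eventually_at_right_less)
  ultimately have "\<forall>\<^sub>F t in at_right 0. (f (r0 + t) - f r0) / t < v \<and>
      (0 < v \<longrightarrow> hawking_factor v < hawking_factor a * (r0 / (r0 + t)) ^ p) \<and> 0 < t"
    by (intro eventually_conj)
  then obtain t where t: "(f (r0 + t) - f r0) / t < v"
    "0 < v \<Longrightarrow> hawking_factor v < hawking_factor a * (r0 / (r0 + t)) ^ p" "0 < t"
    using eventually_happens'[OF trivial_limit_at_right_real] by blast
  then have "f (r0 + t) - f r0 < t * v" by (simp add: divide_less_eq mult.commute)
  moreover have "(\<lambda>i. F i (r0 + t) - F i r0) \<longlonglongrightarrow> f (r0 + t) - f r0"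
    using pointwise \<open>a0 < r0\<close> \<open>0 < t\<close> by (intro tendsto_diff) auto
  ultimately have "\<forall>\<^sub>F i in sequentially. F i (r0 + t) - F i r0 < t * v"
    by (rule order_tendstoD(2)[rotated])
  then show ?thesis
  proof (rule eventually_mono)
    fix i assume "F i (r0 + t) - F i r0 < t * v"
    moreover have "t * v \<le> F i (r0 + t) - F i r0" if "a \<le> deriv (F i) r0"
      using hawking_mass_mono_increment_ge[OF mass_mono b_nonneg, of i r0 "r0 + t" a v]
        b_le[of i] \<open>a0 < r0\<close> t \<open>v < a\<close> that by simp
    ultimately show "deriv (F i) r0 < a" by (meson not_less)
  qed
qed

private lemma eventually_deriv_greater:
  assumes "a < D"
  shows "\<forall>\<^sub>F i in sequentially. a < deriv (F i) r0"
proof -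
  define v where "v = (D + a) / 2"
  have "a < v" "v < D" using assms unfolding v_def by auto
  have "\<forall>\<^sub>F t in at_left 0. v < (f (r0 + t) - f r0) / t"
    using order_tendstoD(1)[OF difference_quotient_tendsto \<open>v < D\<close>]
    by (simp add: eventually_at_split)
  moreover have "\<forall>\<^sub>F t in at_left 0.
      0 \<le> a \<longrightarrow> hawking_factor a * (r0 / (r0 + t)) ^ p < hawking_factor v"
  proof (cases "0 \<le> a")
    case True
    then have "hawking_factor a < hawking_factor v"
      using \<open>a < v\<close> by (simp add: hawking_factor_less_iff)
    from order_tendstoD(2)[OF tendsto_ratio_power_at_0[OF r0_pos] this]
    show ?thesis by (auto simp: eventually_at_split elim: eventually_mono)
  qed simp
  moreover have "\<forall>\<^sub>F t in at_left 0. t \<in> {a0 - r0<..<0}"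
    using \<open>a0 < r0\<close> by (intro eventually_at_left_real) simp
  ultimately have "\<forall>\<^sub>F t in at_left 0. v < (f (r0 + t) - f r0) / t \<and>
      (0 \<le> a \<longrightarrow> hawking_factor a * (r0 / (r0 + t)) ^ p < hawking_factor v) \<and>
      t \<in> {a0 - r0<..<0}"
    by (intro eventually_conj)
  then obtain t where t: "v < (f (r0 + t) - f r0) / t"
    "0 \<le> a \<Longrightarrow> hawking_factor a * (r0 / (r0 + t)) ^ p < hawking_factor v"
    "t < 0" "a0 - r0 < t"
    using eventually_happens'[OF trivial_limit_at_left_real] by auto
  then have "(r0 - (r0 + t)) * v < f r0 - f (r0 + t)" by (simp add: less_divide_eq algebra_simps)
  moreover have "(\<lambda>i. F i r0 - F i (r0 + t)) \<longlonglongrightarrow> f r0 - f (r0 + t)"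
    using pointwise \<open>a0 < r0\<close> t by (intro tendsto_diff) auto
  ultimately have "\<forall>\<^sub>F i in sequentially. (r0 - (r0 + t)) * v < F i r0 - F i (r0 + t)"
    by (rule order_tendstoD(1)[rotated])
  then show ?thesis
  proof (rule eventually_mono)
    fix i assume "(r0 - (r0 + t)) * v < F i r0 - F i (r0 + t)"
    moreover have "F i r0 - F i (r0 + t) \<le> (r0 - (r0 + t)) * v" if "deriv (F i) r0 \<le> a"
      using hawking_mass_mono_increment_le[OF mass_mono b_nonneg, of i "r0 + t" r0 a v]
        b_le[of i] t \<open>a < v\<close> that by simp
    ultimately show "a < deriv (F i) r0" by (meson not_less)
  qed
qed

theorem hawking_mass_mono_deriv_tendsto: "(\<lambda>i. deriv (F i) r0) \<longlonglongrightarrow> D"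
  by (rule order_tendstoI) (use eventually_deriv_less eventually_deriv_greater in auto)

end

theorem lemma4p3:
  fixes n :: nat and h F :: "nat \<Rightarrow> real \<Rightarrow> real" and f :: "real \<Rightarrow> real"
    and a0 r0 :: real
  assumes "n \<ge> 3"
    and "\<And>i. rotsym n (h i)"
    and "\<And>i. graphrep (h i) (F i)"
    and "a0 > 0"
    and "\<And>i. h i 0 \<le> a0"
    and "\<And>r. r \<ge> a0 \<Longrightarrow> (\<lambda>i. F i r) \<longlonglongrightarrow> f r"
    and "r0 > a0"
    and "f differentiable at r0"
  shows "(\<lambda>i. deriv (F i) r0) \<longlonglongrightarrow> deriv f r0"
proof (rule hawking_mass_mono_deriv_tendsto)
  show "hawking_mass_mono (n - 2) (h i 0) (F i)" for i
    using graphrep_hawking_mass_mono assms(1-3) by blast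
  show "0 \<le> h i 0" for i
    using rotsym_warping_function[OF assms(2)] by blast
  show "(f has_real_derivative deriv f r0) (at r0)"
    using assms(8) by (simp add: DERIV_deriv_iff_real_differentiable)
qed (use assms in auto)

end
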